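(* Let $b>3$ be an integer. Then there is at most one prime number that is antipalindromic in base $b$, namely: if $p$ is a prime that is antipalindromic in base $b$, then $p=\frac{b-1}{2}$.
   Context: For an integer $b\ge 2$, every natural number $m$ has a unique base-$b$ expansion $m=a_nb^n+\dots+a_1b+a_0$ with $a_0,\dots,a_n\in\{0,1,\dots,b-1\}$ and $a_n\neq 0$. The number $m$ is antipalindromic in base $b$ if $a_j=b-1-a_{n-j}$ for all $j\in\{0,1,\dots,n\}$. *)

theory Defs
  imports Main "HOL-Computational_Algebra.Primes"
begin

definition digit :: "nat \<Rightarrow> nat \<Rightarrow> nat \<Rightarrow> nat" where
  "digit b m j = (m div b ^ j) mod b"

text \<open>Index n of the leading digit of m > 0 in base b (the n with b^n \<le> m < b^(n+1)).\<close>
definition top_index :: "nat \<Rightarrow> nat \<Rightarrow> nat" where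
  "top_index b m = (GREATEST n. b ^ n \<le> m)"

text \<open>m is antipalindromic in base b: a_j = b - 1 - a_(n-j) for all j \<le> n.
  Only positive m have an expansion with nonzero leading digit.\<close>
definition antipalindromic :: "nat \<Rightarrow> nat \<Rightarrow> bool" where
  "antipalindromic b m \<longleftrightarrow> 0 < m \<and>
     (\<forall>j \<le> top_index b m. digit b m j = b - 1 - digit b m (top_index b m - j))"

end

theory Submission
  imports Defs "HOL-Number_Theory.Cong"
begin

text \<open>Since \<open>b \<equiv> 1 (mod b - 1)\<close>, a number is congruent to its digit sum modulo \<open>b - 1\<close>,
  and antipalindromy gives \<open>a\<^sub>j + a\<^sub>n\<^sub>-\<^sub>j = b - 1\<close>, so twice the digit sum is
  \<open>(n + 1)(b - 1)\<close>. Hence \<open>b - 1\<close> divides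
  twice any antipalindromic number. For a prime \<open>p \<ge> b\<close> this forces \<open>b - 1 \<le> 2\<close>, since
  \<open>b - 1 < p\<close> is coprime to \<open>p\<close>; and a one-digit antipalindromic \<open>p\<close> satisfies \<open>p = b - 1 - p\<close>.\<close>

lemma top_index_bounds:
  assumes "b > 1" "m > 0"
  shows "b ^ top_index b m \<le> m" "m < b ^ Suc (top_index b m)"
proof -
  have bounded: "n \<le> m" if "b ^ n \<le> m" for n
  proof -
    have "n < 2 ^ n" by (rule less_exp)
    also have "\<dots> \<le> b ^ n" using assms(1) by (simp add: power_mono)
    finally show ?thesis using that by simp
  qed
  have "b ^ 0 \<le> m" using assms(2) by simp
  then show "b ^ top_index b m \<le> m"
    unfolding top_index_def using bounded by (rule GreatestI_nat)
  show "m < b ^ Suc (top_index b m)"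
  proof (rule ccontr)
    assume "\<not> m < b ^ Suc (top_index b m)"
    then have "Suc (top_index b m) \<le> top_index b m"
      unfolding top_index_def using bounded by (intro Greatest_le_nat) auto
    then show False by simp
  qed
qed

lemma top_index_eq_0:
  assumes "0 < m" "m < b"
  shows "top_index b m = 0"
proof -
  have "b > 1" using assms by simp
  moreover have "b ^ top_index b m < b ^ 1"
    using top_index_bounds(1)[OF \<open>b > 1\<close> assms(1)] assms(2) by simp
  ultimately have "top_index b m < 1" by (rule power_less_imp_less_exp)
  then show ?thesis by simp
qed

lemma mod_power_eq_sum_digits: "m mod b ^ k = (\<Sum>j<k. digit b m j * b ^ j)"
proof (induction k)
  case 0
  then show ?case by simp
next
  case (Suc k)
  have "m mod b ^ Suc k = b ^ k * (m div b ^ k mod b) + m mod b ^ k"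
    by (metis mod_mult2_eq power_Suc2)
  with Suc show ?case by (simp add: digit_def mult.commute)
qed

lemma sum_digits_eq:
  assumes "b > 1" "m > 0"
  shows "(\<Sum>j\<le>top_index b m. digit b m j * b ^ j) = m"
  using mod_power_eq_sum_digits[of m b "Suc (top_index b m)"] top_index_bounds[OF assms]
  by (simp add: lessThan_Suc_atMost)

lemma cong_sum_powers_base:
  fixes b :: nat
  assumes "b \<ge> 1"
  shows "[(\<Sum>j\<in>A. f j * b ^ j) = (\<Sum>j\<in>A. f j)] (mod (b - 1))"
proof -
  have "b = 1 * (b - 1) + 1"
    using assms by simp
  then have "[b = 1] (mod (b - 1))"
    using assms by (metis cong_le_nat)
  then have "[(\<Sum>j\<in>A. f j * b ^ j) = (\<Sum>j\<in>A. f j * 1 ^ j)] (mod (b - 1))"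
    by (intro cong_sum cong_mult cong_pow cong_refl)
  then show ?thesis by simp
qed

lemma antipalindromic_sum_digits:
  assumes "b > 0" "antipalindromic b m"
  shows "2 * (\<Sum>j\<le>top_index b m. digit b m j) = (top_index b m + 1) * (b - 1)"
proof -
  define n where "n = top_index b m"
  have pair: "digit b m j + digit b m (n - j) = b - 1" if "j \<le> n" for j
  proof -
    have "digit b m j = b - 1 - digit b m (n - j)"
      using that assms(2) unfolding antipalindromic_def n_def by blast
    moreover have "digit b m (n - j) < b"
      using assms(1) by (simp add: digit_def)
    ultimately show ?thesis by simp
  qed
  have "(\<Sum>j\<le>n. digit b m (n - j)) = (\<Sum>j\<le>n. digit b m j)"
    by (rule sum.reindex_bij_witness[of _ "\<lambda>j. n - j" "\<lambda>j. n - j"]) auto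
  then have "2 * (\<Sum>j\<le>n. digit b m j) = (\<Sum>j\<le>n. digit b m j + digit b m (n - j))"
    by (simp add: sum.distrib)
  also have "\<dots> = (\<Sum>j\<le>n. b - 1)"
    using pair by (intro sum.cong) auto
  finally show ?thesis by (simp add: n_def)
qed

lemma antipalindromic_dvd_double:
  assumes "b > 1" "antipalindromic b m"
  shows "(b - 1) dvd 2 * m"
proof -
  define n where "n = top_index b m"
  have "m > 0" using assms(2) by (simp add: antipalindromic_def)
  then have "[m = (\<Sum>j\<le>n. digit b m j)] (mod (b - 1))"
    using sum_digits_eq[OF assms(1)] cong_sum_powers_base[of b "digit b m" "{..n}"] assms(1)
    by (simp add: n_def)
  then have "[2 * m = 2 * (\<Sum>j\<le>n. digit b m j)] (mod (b - 1))"
    by (rule cong_scalar_left)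
  also have "2 * (\<Sum>j\<le>n. digit b m j) = (n + 1) * (b - 1)"
    using antipalindromic_sum_digits assms by (simp add: n_def)
  also have "[(n + 1) * (b - 1) = 0] (mod (b - 1))"
    by (simp add: cong_0_iff)
  finally show ?thesis
    by (simp add: cong_0_iff)
qed

lemma antipalindromic_less_base:
  assumes "antipalindromic b m" "m < b"
  shows "2 * m = b - 1"
proof -
  have "m > 0" using assms(1) by (simp add: antipalindromic_def)
  then have "top_index b m = 0" using assms(2) by (rule top_index_eq_0)
  moreover have "digit b m 0 = m" using assms(2) by (simp add: digit_def)
  ultimately have "m = b - 1 - m"
    using assms(1) unfolding antipalindromic_def by (metis le_refl diff_zero)
  then show ?thesis by simp
qed

theorem mainTheorem5:
  fixes b p :: nat
  assumes "b > 3" and "prime p" and "antipalindromic b p"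
  shows "2 * p = b - 1"
proof (cases "p < b")
  case True
  with assms(3) show ?thesis by (rule antipalindromic_less_base)
next
  case False
  have "\<not> p dvd (b - 1)"
    using False assms(1) by (auto dest: dvd_imp_le)
  then have "coprime (b - 1) p"
    using assms(2) by (simp add: prime_imp_coprime coprime_commute)
  moreover have "(b - 1) dvd 2 * p"
    using assms(1,3) by (intro antipalindromic_dvd_double) auto
  ultimately have "(b - 1) dvd 2"
    by (simp add: coprime_dvd_mult_left_iff)
  with assms(1) show ?thesis by (auto dest: dvd_imp_le)
qed

end
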